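(* Let $K=\{K_X\}_{X\subset\Lambda_L}$ be an even interaction on $\Lambda_L$ and $K_{\Lambda_L}=\sum_{X\subset\Lambda_L}K_X$. Then, for every $\kappa\ge0$, \[ \bigl\|[K_{\Lambda_L},\bar q_{\Lambda_L}]\bigr\|\le2\|K\|_0\le2\|K\|_\kappa . \]
   Context: $\Lambda_L=(\mathbb Z/L\mathbb Z)^d$, $L\in2\mathbb N$; fermionic Fock space over $\ell^2(\Lambda_L)\otimes\mathbb C^2$ with CAR operators $c_{x\sigma}$, $n_{x\sigma}=c^*_{x\sigma}c_{x\sigma}$, $n_x=n_{x\uparrow}+n_{x\downarrow}$, $q_x=(n_x-1)^2$, $\bar q_{\Lambda_L}=|\Lambda_L|^{-1}\sum_{x\in\Lambda_L}q_x$. An even interaction is $K=\{K_X\}$ with $K_X$ a parity-even (invariant under $c_{x\sigma}\mapsto-c_{x\sigma}$) element of the CAR algebra generated by $c_{x\sigma},c^*_{x\sigma}$, $x\in X$. $\|K\|_\kappa=\sup_x\sum_{X\ni x}e^{\kappa|X|}\|K_X\|$ (operator norm), $\|K\|_0$ the case $\kappa=0$. *)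

theory Defs
  imports Complex_Main "HOL-Library.List_Lexorder" "HOL-Library.Product_Lexorder"
begin

text \<open>Sites of the torus (Z/LZ)^d are encoded as lists of length d with entries < L.
  A mode is a pair (site, spin), spin True = up, False = down.
  The fermionic Fock space over l2(Lambda) x C^2 is realised in the occupation-number basis:
  basis vectors are indexed by subsets S of the set of modes (occupied modes).
  Operators are matrices indexed by pairs of such subsets, vanishing outside the basis B.\<close>

type_synonym site = "nat list"
type_synonym mode = "site \<times> bool"
type_synonym op = "mode set \<Rightarrow> mode set \<Rightarrow> complex"

definition Lam :: "nat \<Rightarrow> nat \<Rightarrow> site set" where
  "Lam d L = {x. length x = d \<and> set x \<subseteq> {..<L}}"

definition modes :: "site set \<Rightarrow> mode set" where
  "modes X = X \<times> (UNIV :: bool set)"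

definition fock_basis :: "site set \<Rightarrow> mode set set" where
  "fock_basis \<Lambda> = Pow (modes \<Lambda>)"

definition idop :: "mode set set \<Rightarrow> op" where
  "idop B = (\<lambda>S T. if S \<in> B \<and> T \<in> B \<and> S = T then 1 else 0)"

definition opmul :: "mode set set \<Rightarrow> op \<Rightarrow> op \<Rightarrow> op" where
  "opmul B A C = (\<lambda>S T. \<Sum>U\<in>B. A S U * C U T)"

definition opadj :: "op \<Rightarrow> op" where
  "opadj A = (\<lambda>S T. cnj (A T S))"

definition opadd :: "op \<Rightarrow> op \<Rightarrow> op" where
  "opadd A C = (\<lambda>S T. A S T + C S T)"

definition opsub :: "op \<Rightarrow> op \<Rightarrow> op" where
  "opsub A C = (\<lambda>S T. A S T - C S T)"

definition opscale :: "complex \<Rightarrow> op \<Rightarrow> op" where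
  "opscale a A = (\<lambda>S T. a * A S T)"

text \<open>Annihilation operator (Jordan--Wigner with respect to the linear order on modes).\<close>
definition annih :: "mode set set \<Rightarrow> mode \<Rightarrow> op" where
  "annih B m = (\<lambda>S T. if S \<in> B \<and> T \<in> B \<and> m \<in> T \<and> S = T - {m}
                       then (-1) ^ card {k\<in>T. k < m} else 0)"

definition creat :: "mode set set \<Rightarrow> mode \<Rightarrow> op" where
  "creat B m = opadj (annih B m)"

text \<open>Parity operator (-1)^N; conjugation by it implements c \<mapsto> -c.\<close>
definition parity :: "mode set set \<Rightarrow> op" where
  "parity B = (\<lambda>S T. if S \<in> B \<and> T \<in> B \<and> S = T then (-1) ^ card S else 0)"

inductive_set car_alg :: "mode set set \<Rightarrow> mode set \<Rightarrow> op set" for B M where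
  car_id: "idop B \<in> car_alg B M"
| car_annih: "m \<in> M \<Longrightarrow> annih B m \<in> car_alg B M"
| car_creat: "m \<in> M \<Longrightarrow> creat B m \<in> car_alg B M"
| car_add: "A \<in> car_alg B M \<Longrightarrow> C \<in> car_alg B M \<Longrightarrow> opadd A C \<in> car_alg B M"
| car_scale: "A \<in> car_alg B M \<Longrightarrow> opscale a A \<in> car_alg B M"
| car_mul: "A \<in> car_alg B M \<Longrightarrow> C \<in> car_alg B M \<Longrightarrow> opmul B A C \<in> car_alg B M"

definition even_op :: "mode set set \<Rightarrow> op \<Rightarrow> bool" where
  "even_op B A \<longleftrightarrow> opmul B (opmul B (parity B) A) (parity B) = A"

definition even_interaction :: "site set \<Rightarrow> (site set \<Rightarrow> op) \<Rightarrow> bool" where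
  "even_interaction \<Lambda> K \<longleftrightarrow>
     (\<forall>X. X \<subseteq> \<Lambda> \<longrightarrow> K X \<in> car_alg (fock_basis \<Lambda>) (modes X) \<and> even_op (fock_basis \<Lambda>) (K X))"

definition vnorm :: "mode set set \<Rightarrow> (mode set \<Rightarrow> complex) \<Rightarrow> real" where
  "vnorm B v = sqrt (\<Sum>S\<in>B. (cmod (v S))\<^sup>2)"

definition opapp :: "mode set set \<Rightarrow> op \<Rightarrow> (mode set \<Rightarrow> complex) \<Rightarrow> (mode set \<Rightarrow> complex)" where
  "opapp B A v = (\<lambda>S. \<Sum>T\<in>B. A S T * v T)"

definition opnorm :: "mode set set \<Rightarrow> op \<Rightarrow> real" where
  "opnorm B A = Sup ((\<lambda>v. vnorm B (opapp B A v)) ` {v. vnorm B v \<le> 1})"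

definition commutator :: "mode set set \<Rightarrow> op \<Rightarrow> op \<Rightarrow> op" where
  "commutator B A C = opsub (opmul B A C) (opmul B C A)"

definition numop :: "mode set set \<Rightarrow> mode \<Rightarrow> op" where
  "numop B m = opmul B (creat B m) (annih B m)"

definition n_site :: "mode set set \<Rightarrow> site \<Rightarrow> op" where
  "n_site B x = opadd (numop B (x, True)) (numop B (x, False))"

definition q_site :: "mode set set \<Rightarrow> site \<Rightarrow> op" where
  "q_site B x = opmul B (opsub (n_site B x) (idop B)) (opsub (n_site B x) (idop B))"

definition qbar :: "site set \<Rightarrow> op" where
  "qbar \<Lambda> = opscale (1 / of_nat (card \<Lambda>)) (\<lambda>S T. \<Sum>x\<in>\<Lambda>. q_site (fock_basis \<Lambda>) x S T)"

definition K_total :: "site set \<Rightarrow> (site set \<Rightarrow> op) \<Rightarrow> op" where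
  "K_total \<Lambda> K = (\<lambda>S T. \<Sum>X\<in>Pow \<Lambda>. K X S T)"

definition int_norm :: "site set \<Rightarrow> (site set \<Rightarrow> op) \<Rightarrow> real \<Rightarrow> real" where
  "int_norm \<Lambda> K \<kappa> = Sup ((\<lambda>x. \<Sum>X\<in>{X. X \<subseteq> \<Lambda> \<and> x \<in> X}.
        exp (\<kappa> * real (card X)) * opnorm (fock_basis \<Lambda>) (K X)) ` \<Lambda>)"

end

theory Submission imports Defs "HOL-Analysis.L2_Norm" begin

(* An element of the CAR algebra over the modes of X only changes occupation numbers inside X,
   while q_x is diagonal in the occupation-number basis with eigenvalues in {0, 1}. Hence
   [K_X, q_x] = 0 unless x is in X, so that
     [K_Lambda, qbar_Lambda] = |Lambda|^-1 sum_x sum_{X containing x} [K_X, q_x],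
   and ||[K_X, q_x]|| <= 2 ||K_X|| ||q_x|| <= 2 ||K_X||. For each x the inner sum is then at most
   2 ||K||_0, and averaging over x preserves this bound. The second inequality is monotonicity
   of ||K||_kappa in kappa. *)

lemma vnorm_eq_L2_set: "vnorm B v = L2_set (\<lambda>S. cmod (v S)) B"
  unfolding vnorm_def L2_set_def by simp

lemma vnorm_nonneg: "0 \<le> vnorm B v"
  by (simp add: vnorm_eq_L2_set)

lemma vnorm_cong: "(\<And>S. S \<in> B \<Longrightarrow> u S = w S) \<Longrightarrow> vnorm B u = vnorm B w"
  unfolding vnorm_def by (metis (no_types, lifting) sum.cong)

lemma vnorm_mono: "(\<And>S. S \<in> B \<Longrightarrow> cmod (u S) \<le> cmod (w S)) \<Longrightarrow> vnorm B u \<le> vnorm B w"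
  unfolding vnorm_eq_L2_set by (rule L2_set_mono) auto

lemma vnorm_scale: "vnorm B (\<lambda>S. c * u S) = cmod c * vnorm B u"
  unfolding vnorm_eq_L2_set by (simp add: L2_set_right_distrib norm_mult)

lemma vnorm_add_le: "vnorm B (\<lambda>S. u S + w S) \<le> vnorm B u + vnorm B w"
proof -
  have "vnorm B (\<lambda>S. u S + w S) \<le> L2_set (\<lambda>S. cmod (u S) + cmod (w S)) B"
    unfolding vnorm_eq_L2_set by (rule L2_set_mono) (auto intro: norm_triangle_ineq)
  also have "\<dots> \<le> vnorm B u + vnorm B w"
    unfolding vnorm_eq_L2_set by (rule L2_set_triangle_ineq)
  finally show ?thesis .
qed

lemma vnorm_diff_le: "vnorm B (\<lambda>S. u S - w S) \<le> vnorm B u + vnorm B w"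
  using vnorm_add_le[of B u "\<lambda>S. - w S"] vnorm_scale[of B "-1" w] by simp

lemma vnorm_sum_le:
  assumes "finite I"
  shows "vnorm B (\<lambda>S. \<Sum>i\<in>I. f i S) \<le> (\<Sum>i\<in>I. vnorm B (f i))"
  using assms
proof (induction I rule: finite_induct)
  case empty
  then show ?case by (simp add: vnorm_def)
next
  case (insert i I)
  then have "vnorm B (\<lambda>S. \<Sum>j\<in>insert i I. f j S) \<le> vnorm B (f i) + vnorm B (\<lambda>S. \<Sum>j\<in>I. f j S)"
    using vnorm_add_le[of B "f i"] by simp
  with insert show ?case by simp
qed

lemma norm_le_vnorm: "finite B \<Longrightarrow> S \<in> B \<Longrightarrow> cmod (v S) \<le> vnorm B v"
  unfolding vnorm_eq_L2_set by (rule member_le_L2_set)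

lemma vnorm_opapp_le_entry_sum:
  assumes "finite B"
  shows "vnorm B (opapp B A v) \<le> (\<Sum>S\<in>B. \<Sum>T\<in>B. cmod (A S T)) * vnorm B v"
proof -
  have entry: "cmod (opapp B A v S) \<le> (\<Sum>T\<in>B. cmod (A S T)) * vnorm B v" for S
  proof -
    have "cmod (opapp B A v S) \<le> (\<Sum>T\<in>B. cmod (A S T * v T))"
      unfolding opapp_def by (rule norm_sum)
    also have "\<dots> \<le> (\<Sum>T\<in>B. cmod (A S T) * vnorm B v)"
      by (rule sum_mono) (simp add: norm_mult assms norm_le_vnorm mult_left_mono)
    finally show ?thesis by (simp add: sum_distrib_right)
  qed
  have "vnorm B (opapp B A v) \<le> (\<Sum>S\<in>B. cmod (opapp B A v S))"
    unfolding vnorm_eq_L2_set by (rule L2_set_le_sum) simp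
  also have "\<dots> \<le> (\<Sum>S\<in>B. (\<Sum>T\<in>B. cmod (A S T)) * vnorm B v)"
    by (intro sum_mono entry)
  finally show ?thesis by (simp add: sum_distrib_right)
qed

lemma bdd_above_opnorm:
  assumes "finite B"
  shows "bdd_above ((\<lambda>v. vnorm B (opapp B A v)) ` {v. vnorm B v \<le> 1})"
proof (rule bdd_aboveI2)
  fix v assume "v \<in> {v. vnorm B v \<le> 1}"
  have "vnorm B (opapp B A v) \<le> (\<Sum>S\<in>B. \<Sum>T\<in>B. cmod (A S T)) * vnorm B v"
    by (rule vnorm_opapp_le_entry_sum[OF assms])
  also have "\<dots> \<le> (\<Sum>S\<in>B. \<Sum>T\<in>B. cmod (A S T))"
    using \<open>v \<in> {v. vnorm B v \<le> 1}\<close> by (intro mult_left_le) (simp_all add: sum_nonneg)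
  finally show "vnorm B (opapp B A v) \<le> (\<Sum>S\<in>B. \<Sum>T\<in>B. cmod (A S T))" .
qed

lemma vnorm_opapp_le_opnorm_ball:
  assumes "finite B" "vnorm B v \<le> 1"
  shows "vnorm B (opapp B A v) \<le> opnorm B A"
  unfolding opnorm_def by (rule cSup_upper) (use assms bdd_above_opnorm in auto)

lemma opnorm_nonneg: "finite B \<Longrightarrow> 0 \<le> opnorm B A"
  using vnorm_opapp_le_opnorm_ball[of B "\<lambda>_. 0" A]
  by (simp add: vnorm_def opapp_def)

lemma opnorm_le:
  assumes "\<And>v. vnorm B v \<le> 1 \<Longrightarrow> vnorm B (opapp B A v) \<le> c"
  shows "opnorm B A \<le> c"
  unfolding opnorm_def
proof (rule cSup_least)
  have "(\<lambda>_. 0) \<in> {v. vnorm B v \<le> 1}" by (simp add: vnorm_def)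
  then show "(\<lambda>v. vnorm B (opapp B A v)) ` {v. vnorm B v \<le> 1} \<noteq> {}" by blast
qed (use assms in auto)

lemma vnorm_opapp_le:
  assumes "finite B"
  shows "vnorm B (opapp B A v) \<le> opnorm B A * vnorm B v"
proof (cases "vnorm B v = 0")
  case True
  then have "\<forall>S\<in>B. v S = 0"
    using assms by (simp add: vnorm_eq_L2_set L2_set_eq_0_iff)
  then have "vnorm B (opapp B A v) = 0"
    by (simp add: opapp_def vnorm_def)
  with True show ?thesis by simp
next
  case False
  then have pos: "vnorm B v > 0" using vnorm_nonneg[of B v] by simp
  define c where "c = complex_of_real (1 / vnorm B v)"
  have scaled: "opapp B A (\<lambda>T. c * v T) = (\<lambda>S. c * opapp B A v S)"
    by (auto simp: opapp_def sum_distrib_left ac_simps)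
  have "vnorm B (\<lambda>T. c * v T) = 1"
    unfolding vnorm_scale c_def using pos by (simp add: norm_divide)
  then have "vnorm B (opapp B A (\<lambda>T. c * v T)) \<le> opnorm B A"
    by (intro vnorm_opapp_le_opnorm_ball assms) simp
  moreover have "vnorm B (opapp B A (\<lambda>T. c * v T)) = vnorm B (opapp B A v) / vnorm B v"
    unfolding scaled vnorm_scale using pos by (simp add: c_def norm_divide)
  ultimately have "vnorm B (opapp B A v) / vnorm B v \<le> opnorm B A" by simp
  with pos show ?thesis by (simp add: divide_le_eq mult.commute)
qed

lemma opnorm_le_bound:
  assumes "\<And>v. vnorm B (opapp B A v) \<le> c * vnorm B v" "0 \<le> c"
  shows "opnorm B A \<le> c"
  by (rule opnorm_le) (metis assms mult_left_le order_trans)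

lemma opnorm_cong:
  assumes "\<And>S T. S \<in> B \<Longrightarrow> T \<in> B \<Longrightarrow> A S T = C S T"
  shows "opnorm B A = opnorm B C"
proof -
  have "vnorm B (opapp B A v) = vnorm B (opapp B C v)" for v
    by (rule vnorm_cong) (simp add: opapp_def assms)
  then show ?thesis by (simp add: opnorm_def)
qed

lemma opnorm_opscale_le:
  assumes "finite B"
  shows "opnorm B (opscale a A) \<le> cmod a * opnorm B A"
proof (rule opnorm_le_bound)
  fix v
  have "opapp B (opscale a A) v = (\<lambda>S. a * opapp B A v S)"
    by (simp add: opapp_def opscale_def sum_distrib_left ac_simps)
  then show "vnorm B (opapp B (opscale a A) v) \<le> cmod a * opnorm B A * vnorm B v"
    using vnorm_opapp_le[OF assms, of A v]
    by (simp add: vnorm_scale mult.assoc mult_left_mono)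
qed (simp add: opnorm_nonneg assms)

lemma opnorm_sum_le:
  assumes "finite B" "finite I"
  shows "opnorm B (\<lambda>S T. \<Sum>i\<in>I. A i S T) \<le> (\<Sum>i\<in>I. opnorm B (A i))"
proof (rule opnorm_le_bound)
  fix v
  have "opapp B (\<lambda>S T. \<Sum>i\<in>I. A i S T) v = (\<lambda>S. \<Sum>i\<in>I. opapp B (A i) v S)"
    unfolding opapp_def sum_distrib_right by (rule ext, rule sum.swap)
  then have "vnorm B (opapp B (\<lambda>S T. \<Sum>i\<in>I. A i S T) v) \<le> (\<Sum>i\<in>I. vnorm B (opapp B (A i) v))"
    using vnorm_sum_le[OF assms(2)] by simp
  also have "\<dots> \<le> (\<Sum>i\<in>I. opnorm B (A i) * vnorm B v)"
    by (intro sum_mono vnorm_opapp_le assms(1))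
  finally show "vnorm B (opapp B (\<lambda>S T. \<Sum>i\<in>I. A i S T) v) \<le> (\<Sum>i\<in>I. opnorm B (A i)) * vnorm B v"
    by (simp add: sum_distrib_right)
qed (simp add: sum_nonneg opnorm_nonneg assms)

lemma opapp_opmul: "opapp B (opmul B A C) v = opapp B A (opapp B C v)"
proof
  fix S
  have "(\<Sum>T\<in>B. \<Sum>U\<in>B. A S U * C U T * v T) = (\<Sum>U\<in>B. \<Sum>T\<in>B. A S U * C U T * v T)"
    by (rule sum.swap)
  then show "opapp B (opmul B A C) v S = opapp B A (opapp B C v) S"
    by (simp add: opapp_def opmul_def sum_distrib_left sum_distrib_right mult.assoc)
qed

lemma opnorm_opmul_le:
  assumes "finite B"
  shows "opnorm B (opmul B A C) \<le> opnorm B A * opnorm B C"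
proof (rule opnorm_le_bound)
  fix v
  have "vnorm B (opapp B A (opapp B C v)) \<le> opnorm B A * vnorm B (opapp B C v)"
    by (rule vnorm_opapp_le[OF assms])
  also have "\<dots> \<le> opnorm B A * (opnorm B C * vnorm B v)"
    by (intro mult_left_mono vnorm_opapp_le opnorm_nonneg assms)
  finally show "vnorm B (opapp B (opmul B A C) v) \<le> opnorm B A * opnorm B C * vnorm B v"
    by (simp add: opapp_opmul mult.assoc)
qed (simp add: opnorm_nonneg assms)

lemma opnorm_opsub_le:
  assumes "finite B"
  shows "opnorm B (opsub A C) \<le> opnorm B A + opnorm B C"
proof (rule opnorm_le_bound)
  fix v
  have "opapp B (opsub A C) v = (\<lambda>S. opapp B A v S - opapp B C v S)"
    by (simp add: opapp_def opsub_def sum_subtractf left_diff_distrib)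
  then have "vnorm B (opapp B (opsub A C) v) \<le> vnorm B (opapp B A v) + vnorm B (opapp B C v)"
    using vnorm_diff_le by simp
  also have "\<dots> \<le> opnorm B A * vnorm B v + opnorm B C * vnorm B v"
    by (intro add_mono vnorm_opapp_le assms)
  finally show "vnorm B (opapp B (opsub A C) v) \<le> (opnorm B A + opnorm B C) * vnorm B v"
    by (simp add: distrib_right)
qed (simp add: opnorm_nonneg assms)

lemma opnorm_commutator_le:
  assumes "finite B"
  shows "opnorm B (commutator B A C) \<le> 2 * opnorm B A * opnorm B C"
proof -
  have "opnorm B (opmul B C A) \<le> opnorm B A * opnorm B C"
    using opnorm_opmul_le[OF assms, of C A] by (simp add: mult.commute)
  then show ?thesis
    using opnorm_opsub_le[OF assms, of "opmul B A C" "opmul B C A"] opnorm_opmul_le[OF assms, of A C]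
    by (simp add: commutator_def)
qed

definition diag_op :: "mode set set \<Rightarrow> op \<Rightarrow> (mode set \<Rightarrow> complex) \<Rightarrow> bool" where
  "diag_op B D f \<longleftrightarrow> (\<forall>S T. D S T = (if S \<in> B \<and> T \<in> B \<and> S = T then f S else 0))"

lemma diag_op_idop: "diag_op B (idop B) (\<lambda>_. 1)"
  unfolding diag_op_def idop_def by simp

lemma diag_op_opadd: "diag_op B D f \<Longrightarrow> diag_op B E g \<Longrightarrow> diag_op B (opadd D E) (\<lambda>S. f S + g S)"
  unfolding diag_op_def opadd_def by simp

lemma diag_op_opsub: "diag_op B D f \<Longrightarrow> diag_op B E g \<Longrightarrow> diag_op B (opsub D E) (\<lambda>S. f S - g S)"
  unfolding diag_op_def opsub_def by simp

lemma diag_op_opscale: "diag_op B D f \<Longrightarrow> diag_op B (opscale c D) (\<lambda>S. c * f S)"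
  unfolding diag_op_def opscale_def by simp

lemma diag_op_sum:
  "(\<And>i. i \<in> I \<Longrightarrow> diag_op B (D i) (f i)) \<Longrightarrow>
    diag_op B (\<lambda>S T. \<Sum>i\<in>I. D i S T) (\<lambda>S. \<Sum>i\<in>I. f i S)"
  unfolding diag_op_def by (auto intro: sum.neutral)

lemma diag_op_opmul:
  assumes "finite B" "diag_op B D f" "diag_op B E g"
  shows "diag_op B (opmul B D E) (\<lambda>S. f S * g S)"
  unfolding diag_op_def
proof (intro allI)
  fix S T
  have "opmul B D E S T = (\<Sum>U\<in>B. if U = S then (if S \<in> B \<and> T \<in> B \<and> S = T then f S * g S else 0) else 0)"
    unfolding opmul_def using assms(2,3) unfolding diag_op_def by (intro sum.cong) auto
  also have "\<dots> = (if S \<in> B \<and> T \<in> B \<and> S = T then f S * g S else 0)"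
    using assms(1) by (simp add: sum.delta)
  finally show "opmul B D E S T = (if S \<in> B \<and> T \<in> B \<and> S = T then f S * g S else 0)" .
qed

lemma opapp_diag_op:
  assumes "finite B" "diag_op B D f" "S \<in> B"
  shows "opapp B D v S = f S * v S"
proof -
  have "opapp B D v S = (\<Sum>T\<in>B. if T = S then f S * v S else 0)"
    unfolding opapp_def using assms(2,3) unfolding diag_op_def by (intro sum.cong) auto
  with assms(1,3) show ?thesis by simp
qed

lemma opnorm_diag_op_le:
  assumes "finite B" "diag_op B D f" "\<And>S. S \<in> B \<Longrightarrow> cmod (f S) \<le> M" "0 \<le> M"
  shows "opnorm B D \<le> M"
proof -
  have "vnorm B (opapp B D v) \<le> vnorm B (\<lambda>S. complex_of_real M * v S)" for v
    by (rule vnorm_mono) (simp add: opapp_diag_op[OF assms(1,2)] norm_mult assms(3,4) mult_right_mono)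
  then have "vnorm B (opapp B D v) \<le> M * vnorm B v" for v
    using assms(4) by (simp add: vnorm_scale)
  then show ?thesis using assms(4) by (rule opnorm_le_bound)
qed

lemma commutator_diag_op:
  assumes "finite B" "diag_op B D g" "S \<in> B" "T \<in> B"
  shows "commutator B A D S T = A S T * (g T - g S)"
proof -
  have "opmul B A D S T = (\<Sum>U\<in>B. if U = T then A S T * g T else 0)"
    unfolding opmul_def using assms(2,4) unfolding diag_op_def by (intro sum.cong) auto
  moreover have "opmul B D A S T = (\<Sum>U\<in>B. if U = S then g S * A S T else 0)"
    unfolding opmul_def using assms(2,3) unfolding diag_op_def by (intro sum.cong) auto
  ultimately show ?thesis
    using assms(1,3,4) by (simp add: commutator_def opsub_def sum.delta algebra_simps)
qed

lemma diag_op_numop: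
  assumes "finite \<Lambda>"
  shows "diag_op (fock_basis \<Lambda>) (numop (fock_basis \<Lambda>) m) (\<lambda>S. if m \<in> S then 1 else 0)"
  unfolding diag_op_def
proof (intro allI)
  fix S T
  let ?B = "fock_basis \<Lambda>"
  have fin: "finite ?B" using assms by (simp add: fock_basis_def modes_def)
  show "numop ?B m S T = (if S \<in> ?B \<and> T \<in> ?B \<and> S = T then (if m \<in> S then 1 else 0) else 0)"
  proof (cases "S \<in> ?B \<and> T \<in> ?B \<and> S = T \<and> m \<in> S")
    case True
    then have "S - {m} \<in> ?B" by (auto simp: fock_basis_def)
    \<comment> \<open>The Jordan-Wigner signs of the creation and the annihilation operator cancel.\<close>
    have "numop ?B m S T = (\<Sum>U\<in>?B. if U = S - {m} then 1 else 0)"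
      unfolding numop_def opmul_def creat_def opadj_def annih_def
      using True by (intro sum.cong) (auto simp: power_mult_distrib[symmetric])
    with True fin \<open>S - {m} \<in> ?B\<close> show ?thesis by auto
  next
    case False
    have "numop ?B m S T = (\<Sum>U\<in>?B. 0)"
      unfolding numop_def opmul_def creat_def opadj_def annih_def
      using False by (intro sum.cong) auto
    with False show ?thesis by auto
  qed
qed

definition q_eigenvalue :: "site \<Rightarrow> mode set \<Rightarrow> complex" where
  "q_eigenvalue x S = ((if (x, True) \<in> S then 1 else 0) + (if (x, False) \<in> S then 1 else 0) - 1)\<^sup>2"

lemma norm_q_eigenvalue_le_1: "cmod (q_eigenvalue x S) \<le> 1"
  unfolding q_eigenvalue_def by auto

lemma q_eigenvalue_eq:
  assumes "S - modes X = T - modes X" "x \<notin> X"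
  shows "q_eigenvalue x S = q_eigenvalue x T"
proof -
  have "(x, b) \<in> S \<longleftrightarrow> (x, b) \<in> T" for b
    using assms unfolding modes_def by blast
  then show ?thesis unfolding q_eigenvalue_def by simp
qed

lemma diag_op_q_site:
  assumes "finite \<Lambda>"
  shows "diag_op (fock_basis \<Lambda>) (q_site (fock_basis \<Lambda>) x) (q_eigenvalue x)"
proof -
  let ?B = "fock_basis \<Lambda>"
  have "diag_op ?B (opsub (n_site ?B x) (idop ?B))
      (\<lambda>S. (if (x, True) \<in> S then 1 else 0) + (if (x, False) \<in> S then 1 else 0) - 1)"
    unfolding n_site_def by (intro diag_op_opsub diag_op_opadd diag_op_numop diag_op_idop assms)
  from diag_op_opmul[OF _ this this] assms show ?thesis
    unfolding q_site_def q_eigenvalue_def by (simp add: fock_basis_def modes_def power2_eq_square)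
qed

lemma opnorm_q_site_le_1: "finite \<Lambda> \<Longrightarrow> opnorm (fock_basis \<Lambda>) (q_site (fock_basis \<Lambda>) x) \<le> 1"
  by (rule opnorm_diag_op_le[OF _ diag_op_q_site norm_q_eigenvalue_le_1])
    (simp_all add: fock_basis_def modes_def)

lemma diag_op_qbar:
  "finite \<Lambda> \<Longrightarrow>
    diag_op (fock_basis \<Lambda>) (qbar \<Lambda>) (\<lambda>S. 1 / of_nat (card \<Lambda>) * (\<Sum>x\<in>\<Lambda>. q_eigenvalue x S))"
  unfolding qbar_def by (intro diag_op_opscale diag_op_sum diag_op_q_site)

lemma car_alg_entry_support:
  assumes "A \<in> car_alg B M" "A S T \<noteq> 0"
  shows "S - M = T - M"
  using assms
proof (induction arbitrary: S T rule: car_alg.induct)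
  case car_id
  then show ?case by (auto simp: idop_def split: if_splits)
next
  case (car_annih m)
  then show ?case by (auto simp: annih_def split: if_splits)
next
  case (car_creat m)
  then show ?case by (auto simp: creat_def opadj_def annih_def split: if_splits)
next
  case (car_add A C)
  then have "A S T \<noteq> 0 \<or> C S T \<noteq> 0" by (auto simp: opadd_def)
  then show ?case using car_add.IH by blast
next
  case (car_scale A a)
  then show ?case by (auto simp: opscale_def)
next
  case (car_mul A C)
  then obtain U where "A S U * C U T \<noteq> 0"
    unfolding opmul_def by (meson sum.neutral)
  then show ?case using car_mul.IH by fastforce
qed

lemma commutator_q_site_eq_0:
  assumes "finite \<Lambda>" "A \<in> car_alg (fock_basis \<Lambda>) (modes X)" "x \<notin> X"
    and "S \<in> fock_basis \<Lambda>" "T \<in> fock_basis \<Lambda>"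
  shows "commutator (fock_basis \<Lambda>) A (q_site (fock_basis \<Lambda>) x) S T = 0"
proof -
  have "A S T * (q_eigenvalue x T - q_eigenvalue x S) = 0"
  proof (cases "A S T = 0")
    case False
    then have "q_eigenvalue x S = q_eigenvalue x T"
      by (intro q_eigenvalue_eq[OF car_alg_entry_support[OF assms(2)] assms(3)])
    then show ?thesis by simp
  qed simp
  then show ?thesis
    using commutator_diag_op[OF _ diag_op_q_site[OF assms(1)] assms(4,5)] assms(1)
    by (simp add: fock_basis_def modes_def)
qed

lemma commutator_K_total_qbar_entry:
  assumes fin: "finite \<Lambda>"
    and local: "\<And>X. X \<subseteq> \<Lambda> \<Longrightarrow> K X \<in> car_alg (fock_basis \<Lambda>) (modes X)"
    and S: "S \<in> fock_basis \<Lambda>" and T: "T \<in> fock_basis \<Lambda>"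
  shows "commutator (fock_basis \<Lambda>) (K_total \<Lambda> K) (qbar \<Lambda>) S T
    = 1 / of_nat (card \<Lambda>) * (\<Sum>x\<in>\<Lambda>. \<Sum>X\<in>{X. X \<subseteq> \<Lambda> \<and> x \<in> X}.
        commutator (fock_basis \<Lambda>) (K X) (q_site (fock_basis \<Lambda>) x) S T)"
proof -
  let ?B = "fock_basis \<Lambda>"
  define c :: complex where "c = 1 / of_nat (card \<Lambda>)"
  define C where "C X x = commutator ?B (K X) (q_site ?B x) S T" for X x
  have finB: "finite ?B" using fin by (simp add: fock_basis_def modes_def)
  have C_eq: "C X x = K X S T * (q_eigenvalue x T - q_eigenvalue x S)" for X x
    unfolding C_def by (rule commutator_diag_op[OF finB diag_op_q_site[OF fin] S T])
  have "commutator ?B (K_total \<Lambda> K) (qbar \<Lambda>) S T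
      = K_total \<Lambda> K S T * (c * (\<Sum>x\<in>\<Lambda>. q_eigenvalue x T) - c * (\<Sum>x\<in>\<Lambda>. q_eigenvalue x S))"
    unfolding c_def by (rule commutator_diag_op[OF finB diag_op_qbar[OF fin] S T])
  also have "\<dots> = c * (K_total \<Lambda> K S T * (\<Sum>x\<in>\<Lambda>. q_eigenvalue x T - q_eigenvalue x S))"
    by (simp only: sum_subtractf right_diff_distrib mult.left_commute)
  also have "\<dots> = c * (\<Sum>X\<in>Pow \<Lambda>. \<Sum>x\<in>\<Lambda>. C X x)"
    by (simp only: K_total_def sum_product C_eq)
  also have "(\<Sum>X\<in>Pow \<Lambda>. \<Sum>x\<in>\<Lambda>. C X x) = (\<Sum>X\<in>Pow \<Lambda>. \<Sum>x\<in>{x\<in>\<Lambda>. x \<in> X}. C X x)"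
  proof (rule sum.cong[OF refl])
    fix X assume "X \<in> Pow \<Lambda>"
    then have "C X x = 0" if "x \<notin> X" for x
      unfolding C_def using commutator_q_site_eq_0[OF fin local _ S T] that by blast
    then show "(\<Sum>x\<in>\<Lambda>. C X x) = (\<Sum>x\<in>{x\<in>\<Lambda>. x \<in> X}. C X x)"
      using fin by (intro sum.mono_neutral_right) auto
  qed
  also have "\<dots> = (\<Sum>x\<in>\<Lambda>. \<Sum>X\<in>{X\<in>Pow \<Lambda>. x \<in> X}. C X x)"
    using fin by (intro sum.swap_restrict) auto
  finally show ?thesis
    unfolding C_def c_def Pow_def by simp
qed

lemma opnorm_commutator_K_total_qbar_le:
  assumes fin: "finite \<Lambda>" and ne: "\<Lambda> \<noteq> {}"
    and local: "\<And>X. X \<subseteq> \<Lambda> \<Longrightarrow> K X \<in> car_alg (fock_basis \<Lambda>) (modes X)"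
    and local_bound: "\<And>x. x \<in> \<Lambda> \<Longrightarrow> (\<Sum>X\<in>{X. X \<subseteq> \<Lambda> \<and> x \<in> X}. opnorm (fock_basis \<Lambda>) (K X)) \<le> I"
  shows "opnorm (fock_basis \<Lambda>) (commutator (fock_basis \<Lambda>) (K_total \<Lambda> K) (qbar \<Lambda>)) \<le> 2 * I"
proof -
  let ?B = "fock_basis \<Lambda>"
  let ?Xs = "\<lambda>x. {X. X \<subseteq> \<Lambda> \<and> x \<in> X}"
  define c :: complex where "c = 1 / of_nat (card \<Lambda>)"
  have finB: "finite ?B" using fin by (simp add: fock_basis_def modes_def)
  have finXs: "finite (?Xs x)" for x
    by (rule finite_subset[of _ "Pow \<Lambda>"]) (use fin in auto)
  have "opnorm ?B (commutator ?B (K_total \<Lambda> K) (qbar \<Lambda>))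
      = opnorm ?B (opscale c (\<lambda>S T. \<Sum>x\<in>\<Lambda>. \<Sum>X\<in>?Xs x. commutator ?B (K X) (q_site ?B x) S T))"
    unfolding c_def opscale_def
    by (rule opnorm_cong) (rule commutator_K_total_qbar_entry[OF fin local])
  also have "\<dots> \<le> cmod c * opnorm ?B (\<lambda>S T. \<Sum>x\<in>\<Lambda>. \<Sum>X\<in>?Xs x. commutator ?B (K X) (q_site ?B x) S T)"
    by (rule opnorm_opscale_le[OF finB])
  also have "\<dots> \<le> cmod c * (\<Sum>x\<in>\<Lambda>. \<Sum>X\<in>?Xs x. opnorm ?B (commutator ?B (K X) (q_site ?B x)))"
  proof (rule mult_left_mono)
    show "opnorm ?B (\<lambda>S T. \<Sum>x\<in>\<Lambda>. \<Sum>X\<in>?Xs x. commutator ?B (K X) (q_site ?B x) S T)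
        \<le> (\<Sum>x\<in>\<Lambda>. \<Sum>X\<in>?Xs x. opnorm ?B (commutator ?B (K X) (q_site ?B x)))"
      using opnorm_sum_le[OF finB fin] opnorm_sum_le[OF finB finXs]
      by (meson order_trans sum_mono)
  qed simp
  also have "\<dots> \<le> cmod c * (\<Sum>x\<in>\<Lambda>. \<Sum>X\<in>?Xs x. 2 * opnorm ?B (K X))"
  proof (intro mult_left_mono sum_mono)
    fix x X
    show "opnorm ?B (commutator ?B (K X) (q_site ?B x)) \<le> 2 * opnorm ?B (K X)"
      using opnorm_commutator_le[OF finB, of "K X" "q_site ?B x"]
        mult_left_le[OF opnorm_q_site_le_1[OF fin, of x], of "2 * opnorm ?B (K X)"]
        opnorm_nonneg[OF finB, of "K X"]
      by linarith
  qed simp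
  also have "\<dots> \<le> cmod c * (\<Sum>x\<in>\<Lambda>. 2 * I)"
  proof (intro mult_left_mono sum_mono)
    fix x assume "x \<in> \<Lambda>"
    then show "(\<Sum>X\<in>?Xs x. 2 * opnorm ?B (K X)) \<le> 2 * I"
      unfolding sum_distrib_left[symmetric] using local_bound by simp
  qed simp
  also have "\<dots> = 2 * I"
  proof -
    have "cmod c * real (card \<Lambda>) = 1"
      using fin ne by (simp add: c_def norm_divide)
    then show ?thesis by (simp add: mult.commute mult.left_commute)
  qed
  finally show ?thesis .
qed

lemma int_norm_mono:
  assumes "finite \<Lambda>" "\<Lambda> \<noteq> {}" "\<kappa> \<le> \<kappa>'"
  shows "int_norm \<Lambda> K \<kappa> \<le> int_norm \<Lambda> K \<kappa>'"
  unfolding int_norm_def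
proof (rule cSUP_mono)
  fix x assume "x \<in> \<Lambda>"
  have "exp (\<kappa> * real (card X)) \<le> exp (\<kappa>' * real (card X))" for X
    using assms(3) by (simp add: mult_right_mono)
  moreover have "0 \<le> opnorm (fock_basis \<Lambda>) A" for A
    using assms(1) by (simp add: opnorm_nonneg fock_basis_def modes_def)
  ultimately have "(\<Sum>X\<in>{X. X \<subseteq> \<Lambda> \<and> x \<in> X}. exp (\<kappa> * real (card X)) * opnorm (fock_basis \<Lambda>) (K X))
      \<le> (\<Sum>X\<in>{X. X \<subseteq> \<Lambda> \<and> x \<in> X}. exp (\<kappa>' * real (card X)) * opnorm (fock_basis \<Lambda>) (K X))"
    by (intro sum_mono mult_right_mono)
  with \<open>x \<in> \<Lambda>\<close> show "\<exists>y\<in>\<Lambda>. (\<Sum>X\<in>{X. X \<subseteq> \<Lambda> \<and> x \<in> X}. exp (\<kappa> * real (card X)) * opnorm (fock_basis \<Lambda>) (K X))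
      \<le> (\<Sum>X\<in>{X. X \<subseteq> \<Lambda> \<and> y \<in> X}. exp (\<kappa>' * real (card X)) * opnorm (fock_basis \<Lambda>) (K X))"
    by blast
qed (use assms in auto)

lemma sum_opnorm_le_int_norm:
  assumes "finite \<Lambda>" "x \<in> \<Lambda>"
  shows "(\<Sum>X\<in>{X. X \<subseteq> \<Lambda> \<and> x \<in> X}. opnorm (fock_basis \<Lambda>) (K X)) \<le> int_norm \<Lambda> K 0"
  unfolding int_norm_def by (rule cSUP_upper2[OF _ assms(2)]) (use assms(1) in auto)

lemma finite_Lam: "finite (Lam d L)"
proof -
  have "Lam d L = {xs. set xs \<subseteq> {..<L} \<and> length xs = d}" unfolding Lam_def by auto
  then show ?thesis using finite_lists_length_eq[of "{..<L}" d] by simp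
qed

lemma Lam_nonempty: "L > 0 \<Longrightarrow> Lam d L \<noteq> {}"
  unfolding Lam_def by (rule ccontr) (auto dest: spec[of _ "replicate d 0"])

theorem lemmaA5:
  fixes d L :: nat and K :: "site set \<Rightarrow> op" and \<kappa> :: real
  assumes "even L" and "L > 0"
    and "even_interaction (Lam d L) K"
    and "\<kappa> \<ge> 0"
  shows "opnorm (fock_basis (Lam d L))
            (commutator (fock_basis (Lam d L)) (K_total (Lam d L) K) (qbar (Lam d L)))
           \<le> 2 * int_norm (Lam d L) K 0
       \<and> 2 * int_norm (Lam d L) K 0 \<le> 2 * int_norm (Lam d L) K \<kappa>"
proof -
  have fin: "finite (Lam d L)" by (rule finite_Lam)
  have ne: "Lam d L \<noteq> {}" using \<open>L > 0\<close> by (rule Lam_nonempty)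
  have local: "\<And>X. X \<subseteq> Lam d L \<Longrightarrow> K X \<in> car_alg (fock_basis (Lam d L)) (modes X)"
    using assms(3) unfolding even_interaction_def by blast
  show ?thesis
    using opnorm_commutator_K_total_qbar_le[OF fin ne local sum_opnorm_le_int_norm[OF fin]]
      int_norm_mono[OF fin ne \<open>\<kappa> \<ge> 0\<close>]
    by simp
qed

end
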